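(* Assume $(H_S(\infty))$, and for $\lambda\in(0,1]$ let $\mathbf a_\lambda>0$ be the unique solution of $\lambda\mathbf a_\lambda=\nu_S((\mathbf a_\lambda,\infty))$ and $\mathbf n_\lambda=\lfloor 1/(\lambda\mathbf a_\lambda)\rfloor$. Then there exists a function $\lambda\mapsto\mathbf m_\lambda$ from $(0,1]$ to $\mathbb{N}$ which is non-increasing and satisfies $\lim_{\lambda\to0}\mathbf m_\lambda=\infty$, $\lim_{\lambda\to0}\mathbf m_\lambda/\mathbf n_\lambda=0$, and for every $z\in[0,1)$, $\lim_{\lambda\to0}\mathbf m_\lambda\,\nu_S((\mathbf a_\lambda z,\infty))=\infty$.
   Context: $(H_S(\infty))$: $\mu_S$ is a probability measure on $(0,\infty)$ with unbounded support and finite mean $m_S$; with $\nu_S(dt)=m_S^{-1}\mu_S((t,\infty))dt$, for all $t>0$, $\lim_{x\to\infty}\nu_S((x,\infty))/\nu_S((tx,\infty))=t^\infty$, where $t^\infty=0$ for $t<1$, $1^\infty=1$, $t^\infty=\infty$ for $t>1$. (The map $a\mapsto a/\nu_S((a,\infty))$ is an increasing continuous bijection of $(0,\infty)$, so $\mathbf a_\lambda$ is well defined and $\mathbf a_\lambda\to\infty$ as $\lambda\to0$.) *)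

theory Defs
  imports "HOL-Probability.Probability"
begin

definition mean_S :: "real measure \<Rightarrow> real" where
  "mean_S mu = (\<integral>x. x \<partial>mu)"

text \<open>Tail of the stationary-excess law: nu_S((x,oo)) = m_S^{-1} int_x^oo mu_S((s,oo)) ds.\<close>
definition nu_tail :: "real measure \<Rightarrow> real \<Rightarrow> real" where
  "nu_tail mu x = (LBINT s:{x<..}. measure mu {s<..}) / mean_S mu"

definition H_S_inf :: "real measure \<Rightarrow> bool" where
  "H_S_inf mu \<longleftrightarrow>
     prob_space mu \<and> sets mu = sets borel \<and>
     measure mu {..0} = 0 \<and>
     (\<forall>x. measure mu {x<..} > 0) \<and>
     integrable mu (\<lambda>x. x) \<and>
     (\<forall>t>0. (t < 1 \<longrightarrow> ((\<lambda>x. nu_tail mu x / nu_tail mu (t * x)) \<longlongrightarrow> 0) at_top) \<and>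
            (t = 1 \<longrightarrow> ((\<lambda>x. nu_tail mu x / nu_tail mu (t * x)) \<longlongrightarrow> 1) at_top) \<and>
            (t > 1 \<longrightarrow> filterlim (\<lambda>x. nu_tail mu x / nu_tail mu (t * x)) at_top at_top))"

definition a_lam :: "real measure \<Rightarrow> real \<Rightarrow> real" where
  "a_lam mu l = (THE a. a > 0 \<and> l * a = nu_tail mu a)"

definition n_lam :: "real measure \<Rightarrow> real \<Rightarrow> nat" where
  "n_lam mu l = nat \<lfloor>1 / (l * a_lam mu l)\<rfloor>"

end

theory Submission
  imports Defs
begin

(* Write N = nu_S((.,oo)).  The proof only uses three properties of N: it is positive,
   non-increasing and continuous, and it is rapidly varying, N(x) / N(tx) -> 0 for every
   t in (0,1). *)

abbreviation survival :: "real measure \<Rightarrow> real \<Rightarrow> real" where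
  "survival mu s \<equiv> measure mu {s<..}"

definition survival_integral :: "real measure \<Rightarrow> real \<Rightarrow> real" where
  "survival_integral mu x = (LBINT s:{x<..}. survival mu s)"

lemma nu_tail_eq: "nu_tail mu x = survival_integral mu x / mean_S mu"
  by (simp add: nu_tail_def survival_integral_def)

lemma survival_antimono:
  assumes "prob_space mu" "sets mu = sets borel" "s \<le> t"
  shows "survival mu t \<le> survival mu s"
proof -
  interpret prob_space mu by fact
  show ?thesis by (rule finite_measure_mono) (use assms in auto)
qed

lemma survival_borel_measurable:
  assumes "prob_space mu" "sets mu = sets borel"
  shows "survival mu \<in> borel_measurable borel"
proof -
  have "mono (\<lambda>s. - survival mu s)"
    using survival_antimono[OF assms] by (auto simp: mono_def)
  then have "(\<lambda>s. - survival mu s) \<in> borel_measurable borel"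
    by (rule borel_measurable_mono)
  then show ?thesis
    using borel_measurable_uminus by fastforce
qed

lemma set_integrable_const_interval:
  fixes x y c :: real
  shows "set_integrable lborel {x<..y} (\<lambda>_. c :: real)"
proof -
  have "emeasure lborel {x<..y} < \<infinity>"
    by (cases "x \<le> y") (auto simp: ennreal_less_top not_le)
  then show ?thesis
    unfolding set_integrable_def by (simp add: integrable_mult_left)
qed

lemma survival_integrable_interval:
  assumes "prob_space mu" "sets mu = sets borel"
  shows "set_integrable lborel {x<..y} (survival mu)"
proof (rule set_integrable_bound[where f = "\<lambda>_. 1 :: real"])
  interpret prob_space mu by fact
  show "set_integrable lborel {x<..y} (\<lambda>_. 1 :: real)"
    by (rule set_integrable_const_interval)
  show "set_borel_measurable lborel {x<..y} (survival mu)"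
    unfolding set_borel_measurable_def
    using survival_borel_measurable[OF assms] by measurable
  show "AE s in lborel. s \<in> {x<..y} \<longrightarrow> norm (survival mu s) \<le> norm (1 :: real)"
    by auto
qed

(* On (x,y] the survival function lies between its value at y and 1. *)
lemma survival_integral_interval_bounds:
  assumes "prob_space mu" "sets mu = sets borel" "x < y"
  shows "survival mu y * (y - x) \<le> (LBINT s:{x<..y}. survival mu s)"
    and "(LBINT s:{x<..y}. survival mu s) \<le> y - x"
proof -
  interpret prob_space mu by fact
  have "(LBINT s:{x<..y}. survival mu y) \<le> (LBINT s:{x<..y}. survival mu s)"
    using survival_antimono[OF assms(1,2)]
    by (intro set_integral_mono set_integrable_const_interval
        survival_integrable_interval[OF assms(1,2)]) auto
  then show "survival mu y * (y - x) \<le> (LBINT s:{x<..y}. survival mu s)"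
    using assms(3) by (simp add: set_integral_const mult.commute)
  have "(LBINT s:{x<..y}. survival mu s) \<le> (LBINT s:{x<..y}. (1 :: real))"
    by (intro set_integral_mono set_integrable_const_interval
        survival_integrable_interval[OF assms(1,2)]) auto
  then show "(LBINT s:{x<..y}. survival mu s) \<le> y - x"
    using assms(3) by (simp add: set_integral_const)
qed

(* A tail integral that is nonzero somewhere must come from an integrable function, so
   the survival function is integrable on every half-line. *)
lemma survival_integrable_tail:
  assumes "prob_space mu" "sets mu = sets borel" "survival_integral mu x0 \<noteq> 0"
  shows "set_integrable lborel {x<..} (survival mu)"
proof -
  have tail0: "set_integrable lborel {x0<..} (survival mu)"
    using assms(3) not_integrable_integral_eq
    unfolding survival_integral_def set_lebesgue_integral_def set_integrable_def by blast
  show ?thesis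
  proof (cases "x0 \<le> x")
    case True
    then show ?thesis by (intro set_integrable_subset[OF tail0]) auto
  next
    case False
    then have "{x<..} = {x<..x0} \<union> {x0<..}" by auto
    then show ?thesis
      using set_integrable_Un[OF survival_integrable_interval[OF assms(1,2)] tail0] by auto
  qed
qed

(* The increment of the tail integral over [x,y] is controlled by the two bounds above;
   this is what makes nu_S monotone, positive and Lipschitz. *)
lemma survival_integral_increment:
  assumes "prob_space mu" "sets mu = sets borel" "survival_integral mu x0 \<noteq> 0" "x \<le> y"
  shows "survival mu y * (y - x) \<le> survival_integral mu x - survival_integral mu y"
    and "survival_integral mu x - survival_integral mu y \<le> y - x"
proof -
  have "survival mu y * (y - x) \<le> survival_integral mu x - survival_integral mu y \<and>
        survival_integral mu x - survival_integral mu y \<le> y - x"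
  proof (cases "x = y")
    case False
    then have xy: "x < y" using assms(4) by simp
    have "{x<..} = {x<..y} \<union> {y<..}" "{x<..y} \<inter> {y<..} = {}" using xy by auto
    then have "survival_integral mu x
        = (LBINT s:{x<..y}. survival mu s) + survival_integral mu y"
      unfolding survival_integral_def
      using set_integral_Un[OF _ survival_integrable_interval[OF assms(1,2)]
          survival_integrable_tail[OF assms(1-3)], of x y y] by simp
    then show ?thesis
      using survival_integral_interval_bounds[OF assms(1,2) xy] by simp
  qed simp
  then show "survival mu y * (y - x) \<le> survival_integral mu x - survival_integral mu y"
    and "survival_integral mu x - survival_integral mu y \<le> y - x" by auto
qed

(* The case t = 1 of H_S(oo), nu_S(x) / nu_S(x) -> 1, forces nu_S to be nonzero somewhere;
   in particular the tail integral is not identically zero and m_S is nonzero. *)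
lemma H_S_inf_nondegenerate:
  assumes "H_S_inf mu"
  shows "\<exists>x0. survival_integral mu x0 \<noteq> 0" and "mean_S mu \<noteq> 0"
proof -
  have "((\<lambda>x. nu_tail mu x / nu_tail mu (1 * x)) \<longlongrightarrow> 1) at_top"
    using assms zero_less_one unfolding H_S_inf_def by blast
  then have "eventually (\<lambda>x. nu_tail mu x / nu_tail mu (1 * x) > 1/2) at_top"
    by (rule order_tendstoD(1)) simp
  then obtain x0 where "nu_tail mu x0 / nu_tail mu (1 * x0) > 1/2"
    by (auto simp: eventually_at_top_linorder)
  then have "nu_tail mu x0 \<noteq> 0" by auto
  then show "\<exists>x0. survival_integral mu x0 \<noteq> 0" and "mean_S mu \<noteq> 0"
    by (auto simp: nu_tail_eq)
qed

(* mu_S lives on (0,oo), so its mean is nonnegative and therefore positive. *)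
lemma H_S_inf_mean_pos:
  assumes "H_S_inf mu"
  shows "mean_S mu > 0"
proof -
  have sets: "sets mu = sets borel" and null: "measure mu {..0} = 0" and "prob_space mu"
    using assms unfolding H_S_inf_def by auto
  interpret prob_space mu by fact
  have "AE x in mu. 0 \<le> x"
  proof (rule AE_I'[of "{..0}"])
    show "{..0} \<in> null_sets mu"
      using null by (simp add: null_sets_def sets emeasure_eq_measure)
  qed auto
  then have "mean_S mu \<ge> 0"
    unfolding mean_S_def by (rule integral_nonneg_AE)
  moreover have "mean_S mu \<noteq> 0"
    using H_S_inf_nondegenerate(2)[OF assms] .
  ultimately show ?thesis by simp
qed

lemma nu_tail_increment:
  assumes "H_S_inf mu" "x \<le> y"
  shows "survival mu y * (y - x) / mean_S mu \<le> nu_tail mu x - nu_tail mu y"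
    and "nu_tail mu x - nu_tail mu y \<le> (y - x) / mean_S mu"
proof -
  have ps: "prob_space mu" and sets: "sets mu = sets borel"
    using assms(1) unfolding H_S_inf_def by auto
  obtain x0 where x0: "survival_integral mu x0 \<noteq> 0"
    using H_S_inf_nondegenerate(1)[OF assms(1)] by blast
  have diff: "nu_tail mu x - nu_tail mu y
      = (survival_integral mu x - survival_integral mu y) / mean_S mu"
    by (simp add: nu_tail_eq diff_divide_distrib)
  show "survival mu y * (y - x) / mean_S mu \<le> nu_tail mu x - nu_tail mu y"
    unfolding diff using H_S_inf_mean_pos[OF assms(1)]
    by (intro divide_right_mono survival_integral_increment[OF ps sets x0 assms(2)]) auto
  show "nu_tail mu x - nu_tail mu y \<le> (y - x) / mean_S mu"
    unfolding diff using H_S_inf_mean_pos[OF assms(1)]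
    by (intro divide_right_mono survival_integral_increment[OF ps sets x0 assms(2)]) auto
qed

lemma nu_tail_antimono:
  assumes "H_S_inf mu" "x \<le> y"
  shows "nu_tail mu y \<le> nu_tail mu x"
proof -
  have "0 \<le> survival mu y * (y - x) / mean_S mu"
    using assms(2) H_S_inf_mean_pos[OF assms(1)] by simp
  then show ?thesis using nu_tail_increment(1)[OF assms] by linarith
qed

lemma nu_tail_pos:
  assumes "H_S_inf mu"
  shows "nu_tail mu x > 0"
proof -
  have "0 < survival mu (x + 1) * ((x + 1) - x) / mean_S mu"
    using assms H_S_inf_mean_pos[OF assms] unfolding H_S_inf_def by simp
  moreover have "0 \<le> nu_tail mu (x + 1)"
    using H_S_inf_mean_pos[OF assms]
    unfolding nu_tail_def set_lebesgue_integral_def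
    by (intro divide_nonneg_pos integral_nonneg_AE) (auto simp: indicator_def)
  ultimately show ?thesis
    using nu_tail_increment(1)[OF assms, of x "x + 1"] by linarith
qed

lemma nu_tail_continuous:
  assumes "H_S_inf mu"
  shows "continuous_on UNIV (nu_tail mu)"
proof -
  have "\<bar>nu_tail mu x - nu_tail mu y\<bar> \<le> \<bar>x - y\<bar> / mean_S mu" for x y
  proof (cases "x \<le> y")
    case True
    then show ?thesis
      using nu_tail_antimono[OF assms True] nu_tail_increment(2)[OF assms True] by simp
  next
    case False
    then have "y \<le> x" by simp
    then show ?thesis
      using nu_tail_antimono[OF assms] nu_tail_increment(2)[OF assms] by fastforce
  qed
  then have "(1 / mean_S mu)-lipschitz_on UNIV (nu_tail mu)"
    unfolding lipschitz_on_def dist_real_def using H_S_inf_mean_pos[OF assms] by auto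
  then show ?thesis by (rule lipschitz_on_continuous_on)
qed

(* For a positive non-increasing N, the scale equation l * a = N(a) has at most one
   solution, because l * a - N(a) is strictly increasing in a. *)
lemma scale_equation_unique:
  fixes N :: "real \<Rightarrow> real"
  assumes N_anti: "\<And>x y. x \<le> y \<Longrightarrow> N y \<le> N x" and "l > 0"
    and "l * a = N a" "l * b = N b"
  shows "a = b"
proof (rule ccontr)
  have strict: False if "c < d" "l * c = N c" "l * d = N d" for c d
  proof -
    have "l * c < l * d" using \<open>l > 0\<close> \<open>c < d\<close> by simp
    moreover have "N d \<le> N c" using N_anti \<open>c < d\<close> by simp
    ultimately show False using that by linarith
  qed
  assume "a \<noteq> b"
  then consider "a < b" | "b < a" by linarith
  then show False
  proof cases
    case 1
    then show False using strict assms(3,4) by blast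
  next
    case 2
    then show False using strict assms(3,4) by blast
  qed
qed

(* If N is moreover continuous and 0 < l <= N(1), the intermediate value theorem applied
   to a / N(a) on [1, max 1 (N(1)/l)] yields a solution. *)
lemma scale_equation_exists:
  fixes N :: "real \<Rightarrow> real"
  assumes N_pos: "\<And>x. N x > 0" and N_anti: "\<And>x y. x \<le> y \<Longrightarrow> N y \<le> N x"
    and N_cont: "continuous_on UNIV N" and l: "0 < l" "l \<le> N 1"
  shows "\<exists>a \<ge> 1. l * a = N a"
proof -
  define A where "A = max 1 (N 1 / l)"
  have A1: "1 \<le> A" unfolding A_def by simp
  have cont: "continuous_on {1..A} (\<lambda>a. a / N a)"
    using N_pos by (intro continuous_on_divide continuous_on_id continuous_on_subset[OF N_cont])
      (auto simp: less_imp_neq[symmetric])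
  have lower: "1 / N 1 \<le> 1 / l"
    using l N_pos[of 1] by (intro divide_left_mono) auto
  have "1 / l = (N 1 / l) / N 1" using N_pos[of 1] by simp
  also have "\<dots> \<le> A / N 1"
    using N_pos[of 1] unfolding A_def by (intro divide_right_mono) auto
  also have "\<dots> \<le> A / N A"
    using A1 N_pos[of A] N_anti[OF A1] by (intro divide_left_mono) auto
  finally have upper: "1 / l \<le> A / N A" .
  obtain a where a: "1 \<le> a" "a / N a = 1 / l"
    using IVT'[of "\<lambda>a. a / N a" 1 "1 / l" A] lower upper A1 cont by auto
  then have "l * a = N a" using N_pos[of a] l by (simp add: field_simps)
  then show ?thesis using a by blast
qed

lemma scale_equation_solution:
  fixes N :: "real \<Rightarrow> real"
  assumes N_pos: "\<And>x. N x > 0" and N_anti: "\<And>x y. x \<le> y \<Longrightarrow> N y \<le> N x"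
    and N_cont: "continuous_on UNIV N" and l: "0 < l" "l \<le> N 1"
  defines "a \<equiv> THE a. a > 0 \<and> l * a = N a"
  shows "a > 0" and "l * a = N a"
proof -
  obtain a0 where "a0 \<ge> 1" "l * a0 = N a0"
    using scale_equation_exists[OF N_pos N_anti N_cont l] by blast
  then have "\<exists>!a. a > 0 \<and> l * a = N a"
    using scale_equation_unique[OF N_anti l(1)] by (intro ex1I[of _ a0]) auto
  then have "a > 0 \<and> l * a = N a"
    unfolding a_def by (rule theI')
  then show "a > 0" and "l * a = N a" by auto
qed

lemma scale_antimono:
  fixes N :: "real \<Rightarrow> real"
  assumes N_anti: "\<And>x y. x \<le> y \<Longrightarrow> N y \<le> N x"
    and "0 < l'" "l' \<le> l" "a' > 0" "l * a = N a" "l' * a' = N a'"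
  shows "a \<le> a'"
proof (rule ccontr)
  assume "\<not> a \<le> a'"
  then have "a' < a" by simp
  then have "N a \<le> N a'" using N_anti by simp
  moreover have "l' * a' \<le> l * a'" using assms(3,4) by (intro mult_right_mono) auto
  moreover have "l * a' < l * a" using \<open>a' < a\<close> assms(2,3) by simp
  ultimately show False using assms(5,6) by linarith
qed

(* Solutions of the scale equation escape to infinity as l -> 0: a bounded solution would
   give N(B) <= l * B, which fails for small l. *)
lemma scale_tendsto_infinity:
  fixes N a :: "real \<Rightarrow> real"
  assumes N_pos: "\<And>x. N x > 0" and N_anti: "\<And>x y. x \<le> y \<Longrightarrow> N y \<le> N x"
    and scale: "eventually (\<lambda>l. l * a l = N (a l)) (at_right 0)"
  shows "filterlim a at_top (at_right 0)"
  unfolding filterlim_at_top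
proof
  fix B :: real
  define B' where "B' = max B 1"
  have B': "B' \<ge> 1" "B \<le> B'" unfolding B'_def by auto
  have "eventually (\<lambda>l. l < N B' / B') (at_right 0)"
    using N_pos[of B'] B' by (intro order_tendstoD(2)[OF tendsto_ident_at]) auto
  with scale eventually_at_right_less[of 0]
  show "eventually (\<lambda>l. B \<le> a l) (at_right 0)"
  proof eventually_elim
    case (elim l)
    show ?case
    proof (rule ccontr)
      assume "\<not> B \<le> a l"
      then have small: "a l \<le> B'" using B' by simp
      have "N B' \<le> l * a l" using elim N_anti[OF small] by simp
      also have "\<dots> \<le> l * B'" using small elim by (intro mult_left_mono) auto
      also have "\<dots> < (N B' / B') * B'" using elim B' by (intro mult_strict_right_mono) auto
      also have "\<dots> = N B'" using B' by simp
      finally show False by simp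
    qed
  qed
qed

(* Diagonal argument: countably many eventual properties P k can be realised along a
   single index K(x) -> oo, namely the largest k <= x whose thresholds A 0, ..., A k
   have all been passed. *)
lemma diagonal_eventually:
  fixes P :: "nat \<Rightarrow> real \<Rightarrow> bool"
  assumes "\<And>k. eventually (P k) at_top"
  shows "\<exists>K :: real \<Rightarrow> nat. filterlim K at_top at_top \<and> eventually (\<lambda>x. P (K x) x) at_top"
proof -
  have "\<forall>k. \<exists>A. \<forall>x\<ge>A. P k x"
    using assms by (simp add: eventually_at_top_linorder)
  then obtain A where A: "\<And>k x. x \<ge> A k \<Longrightarrow> P k x" by metis
  define S where "S x = {k. k \<le> nat \<lceil>x\<rceil> \<and> (\<forall>j\<le>k. A j \<le> x)}" for x
  define K where "K x = Max (S x)" for x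
  have finite: "finite (S x)" for x
    unfolding S_def by (rule finite_subset[of _ "{..nat \<lceil>x\<rceil>}"]) auto
  have large: "Z \<le> K x" if "Z \<in> S x" for Z x
    unfolding K_def using finite that by (rule Max_ge)
  have "eventually (\<lambda>x. P (K x) x) at_top"
    using eventually_ge_at_top[of "A 0"]
  proof eventually_elim
    case (elim x)
    then have "0 \<in> S x" by (simp add: S_def)
    then have "K x \<in> S x" unfolding K_def using finite Max_in by blast
    then show ?case using A unfolding S_def by auto
  qed
  moreover have "filterlim K at_top at_top"
    unfolding filterlim_at_top
  proof
    fix Z :: nat
    show "eventually (\<lambda>x. Z \<le> K x) at_top"
      using eventually_ge_at_top[of "max (real Z) (Max (A ` {..Z}))"]
    proof eventually_elim
      case (elim x)
      have "A j \<le> x" if "j \<le> Z" for j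
        using elim Max_ge[of "A ` {..Z}" "A j"] that by auto
      moreover have "Z \<le> nat \<lceil>x\<rceil>" using elim by linarith
      ultimately have "Z \<in> S x" unfolding S_def by auto
      then show ?case by (rule large)
    qed
  qed
  ultimately show ?thesis by blast
qed

(* Rapid variation, made uniform: one K(x) -> oo with (K(x)+1)^2 N(x) <= N(zx)
   eventually, simultaneously for every z in [0,1).  Apply the diagonal argument to the
   levels t_k = 1 - 1/(k+2), which increase to 1. *)
lemma rapid_variation_diagonal:
  fixes N :: "real \<Rightarrow> real"
  assumes N_pos: "\<And>x. N x > 0" and N_anti: "\<And>x y. x \<le> y \<Longrightarrow> N y \<le> N x"
    and N_rapid: "\<And>t. 0 < t \<Longrightarrow> t < 1 \<Longrightarrow> ((\<lambda>x. N x / N (t * x)) \<longlongrightarrow> 0) at_top"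
  obtains K :: "real \<Rightarrow> nat" where "filterlim K at_top at_top"
    and "\<And>z. 0 \<le> z \<Longrightarrow> z < 1 \<Longrightarrow>
      eventually (\<lambda>x. (real (K x) + 1)^2 * N x \<le> N (z * x)) at_top"
proof -
  define t :: "nat \<Rightarrow> real" where "t k = 1 - 1 / (real k + 2)" for k
  have t: "0 < t k" "t k < 1" for k unfolding t_def by (auto simp: field_simps)
  have t_mono: "t k \<le> t k'" if "k \<le> k'" for k k'
    unfolding t_def using that by (auto intro!: divide_left_mono)
  have "eventually (\<lambda>x. (real k + 1)^2 * N x \<le> N (t k * x)) at_top" for k
  proof -
    have "eventually (\<lambda>x. N x / N (t k * x) < 1 / (real k + 1)^2) at_top"
      by (rule order_tendstoD(2)[OF N_rapid[OF t]]) auto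
    then show ?thesis
    proof eventually_elim
      case (elim x)
      then have "N x < 1 / (real k + 1)^2 * N (t k * x)"
        using pos_divide_less_eq[OF N_pos] by blast
      then have "(real k + 1)^2 * N x < (real k + 1)^2 * (1 / (real k + 1)^2 * N (t k * x))"
        by (intro mult_strict_left_mono) auto
      then show ?case by simp
    qed
  qed
  from diagonal_eventually[where P = "\<lambda>k x. (real k + 1)^2 * N x \<le> N (t k * x)", OF this]
  obtain K :: "real \<Rightarrow> nat"
    where K_lim: "filterlim K at_top at_top"
    and K_gap: "eventually (\<lambda>x. (real (K x) + 1)^2 * N x \<le> N (t (K x) * x)) at_top"
    by blast
  have "eventually (\<lambda>x. (real (K x) + 1)^2 * N x \<le> N (z * x)) at_top"
    if z: "0 \<le> z" "z < 1" for z
  proof -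
    define k0 where "k0 = nat \<lceil>1 / (1 - z)\<rceil>"
    have "1 / (1 - z) \<le> real k0 + 2" unfolding k0_def by linarith
    then have "1 / (real k0 + 2) \<le> 1 / (1 / (1 - z))"
      using z by (intro divide_left_mono) auto
    then have "z \<le> t k0" unfolding t_def using z by simp
    have "eventually (\<lambda>x. k0 \<le> K x) at_top"
      using K_lim by (simp add: filterlim_at_top)
    with K_gap eventually_ge_at_top[of 0] show ?thesis
    proof eventually_elim
      case (elim x)
      have "z * x \<le> t (K x) * x"
        using \<open>z \<le> t k0\<close> t_mono[of k0 "K x"] elim by (intro mult_right_mono) auto
      then show ?case using elim N_anti[of "z * x" "t (K x) * x"] by linarith
    qed
  qed
  then show ?thesis by (rule that[OF K_lim])
qed

(* A rapidly varying non-increasing positive function tends to zero, since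
   N(x) <= N(0) * N(x) / N(x/2). *)
lemma rapid_variation_tendsto_0:
  fixes N :: "real \<Rightarrow> real"
  assumes N_pos: "\<And>x. N x > 0" and N_anti: "\<And>x y. x \<le> y \<Longrightarrow> N y \<le> N x"
    and N_rapid: "\<And>t. 0 < t \<Longrightarrow> t < 1 \<Longrightarrow> ((\<lambda>x. N x / N (t * x)) \<longlongrightarrow> 0) at_top"
  shows "(N \<longlongrightarrow> 0) at_top"
proof (rule tendsto_sandwich[of "\<lambda>_. 0" _ _ "\<lambda>x. N 0 * (N x / N ((1/2) * x))"])
  show "eventually (\<lambda>x. 0 \<le> N x) at_top" using N_pos by (simp add: less_imp_le)
  show "eventually (\<lambda>x. N x \<le> N 0 * (N x / N ((1/2) * x))) at_top"
    using eventually_ge_at_top[of 0]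
  proof eventually_elim
    case (elim x)
    have "N ((1/2) * x) \<le> N 0" using elim by (intro N_anti) simp
    then have "N x / N ((1/2) * x) * N ((1/2) * x) \<le> N x / N ((1/2) * x) * N 0"
      using N_pos by (intro mult_left_mono) (auto simp: less_imp_le)
    then show ?case using N_pos[of "(1/2) * x"] by (simp add: mult.commute)
  qed
  show "((\<lambda>x. N 0 * (N x / N ((1/2) * x))) \<longlongrightarrow> 0) at_top"
    using tendsto_mult_right_zero[OF N_rapid[of "1/2"]] by simp
qed simp

definition running_inf :: "(real \<Rightarrow> nat) \<Rightarrow> real \<Rightarrow> nat" where
  "running_inf f l = Inf (f ` {0<..l})"

lemma running_inf_antimono:
  assumes "0 < l1" "l1 \<le> l2"
  shows "running_inf f l2 \<le> running_inf f l1"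
  unfolding running_inf_def using assms by (intro cInf_superset_mono) auto

lemma running_inf_le:
  assumes "0 < l"
  shows "running_inf f l \<le> f l"
  unfolding running_inf_def using assms by (intro cInf_lower) auto

lemma running_inf_attained:
  assumes "0 < l"
  obtains l' where "0 < l'" "l' \<le> l" "running_inf f l = f l'"
proof -
  have "running_inf f l \<in> f ` {0<..l}"
    unfolding running_inf_def using assms by (intro Inf_nat_def1) auto
  then show ?thesis using that by auto
qed

(* Passing to the running infimum preserves divergence of f(l) * h(l) as l -> 0 when h
   is eventually non-decreasing on (0,l], since the infimum is attained at some l' <= l. *)
lemma running_inf_filterlim:
  fixes f :: "real \<Rightarrow> nat" and h :: "real \<Rightarrow> real"
  assumes lim: "filterlim (\<lambda>l. real (f l) * h l) at_top (at_right 0)"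
    and mono: "eventually (\<lambda>l. \<forall>l'. 0 < l' \<and> l' \<le> l \<longrightarrow> h l' \<le> h l) (at_right 0)"
  shows "filterlim (\<lambda>l. real (running_inf f l) * h l) at_top (at_right 0)"
  unfolding filterlim_at_top
proof
  fix B :: real
  obtain b1 where b1: "b1 > 0" "\<And>l. 0 < l \<Longrightarrow> l < b1 \<Longrightarrow> B \<le> real (f l) * h l"
    using lim by (auto simp: filterlim_at_top eventually_at_right_field)
  obtain b2 where b2: "b2 > 0"
    "\<And>l l'. 0 < l \<Longrightarrow> l < b2 \<Longrightarrow> 0 < l' \<Longrightarrow> l' \<le> l \<Longrightarrow> h l' \<le> h l"
    using mono by (auto simp: eventually_at_right_field)
  show "eventually (\<lambda>l. B \<le> real (running_inf f l) * h l) (at_right 0)"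
    unfolding eventually_at_right_field
  proof (intro exI[of _ "min b1 b2"] conjI allI impI)
    show "0 < min b1 b2" using b1 b2 by simp
    fix l :: real
    assume l: "0 < l" "l < min b1 b2"
    obtain l' where l': "0 < l'" "l' \<le> l" "running_inf f l = f l'"
      using running_inf_attained[OF l(1)] by blast
    have "B \<le> real (f l') * h l'" using b1(2) l l' by auto
    also have "\<dots> \<le> real (f l') * h l" using b2(2) l l' by (intro mult_left_mono) auto
    finally show "B \<le> real (running_inf f l) * h l" using l' by simp
  qed
qed

lemma floor_product_lower_bound:
  fixes u w k c :: real
  assumes "0 < u" "0 \<le> k" "(k + 1)^2 * u \<le> w" "w \<le> c"
  shows "k + 1 - c \<le> real (nat \<lfloor>1 / (u * (k + 1))\<rfloor>) * w"
proof -
  define v where "v = 1 / (u * (k + 1))"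
  have v_pos: "0 < v" and w_pos: "0 < w"
    using assms by (auto simp: v_def intro: less_le_trans[of 0 "(k + 1)^2 * u"])
  have "k + 1 = v * ((k + 1)^2 * u)"
    using assms(1,2) by (simp add: v_def power2_eq_square)
  also have "\<dots> \<le> v * w" using v_pos assms(3) by simp
  finally have "k + 1 - w \<le> (v - 1) * w" by (simp add: algebra_simps)
  also have "\<dots> \<le> real (nat \<lfloor>v\<rfloor>) * w" using w_pos by (intro mult_right_mono) linarith+
  finally show ?thesis using assms(4) unfolding v_def by linarith
qed

lemma floor_ratio_upper_bound:
  fixes u k :: real and m :: nat
  assumes "0 < u" "u \<le> 1/2" "0 \<le> k" "real m \<le> 1 / (u * (k + 1))"
  shows "real m / real (nat \<lfloor>1 / u\<rfloor>) \<le> 2 / (k + 1)"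
proof -
  define v where "v = 1 / u"
  have v2: "2 \<le> v" using assms(1,2) by (simp add: v_def field_simps)
  have "v / 2 \<le> real (nat \<lfloor>v\<rfloor>)" using v2 by linarith
  moreover have "real m \<le> v / (k + 1)" using assms(4) by (simp add: v_def)
  ultimately have "real m / real (nat \<lfloor>v\<rfloor>) \<le> (v / (k + 1)) / (v / 2)"
    using v2 assms(3) by (intro frac_le) auto
  also have "\<dots> = 2 / (k + 1)"
  proof -
    have "v \<noteq> 0" "k + 1 \<noteq> 0" using v2 assms(3) by auto
    then show ?thesis by (simp add: divide_simps)
  qed
  finally show ?thesis unfolding v_def .
qed

(* The theorem for an abstract rapidly varying tail N and solutions a of the scale
   equation: m is the running infimum of floor(1/(N(a_l)(K(a_l)+1))), where K comes from
   the uniform rapid variation.  Along a_l the function K tends to infinity, giving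
   m_l / n_l <= 2/(K(a_l)+1) -> 0 and m_l N(a_l z) >= K(a_l) + 1 - N(0) -> oo. *)
lemma intermediate_scale_exists:
  fixes N a :: "real \<Rightarrow> real"
  assumes N_pos: "\<And>x. N x > 0" and N_anti: "\<And>x y. x \<le> y \<Longrightarrow> N y \<le> N x"
    and N_rapid: "\<And>t. 0 < t \<Longrightarrow> t < 1 \<Longrightarrow> ((\<lambda>x. N x / N (t * x)) \<longlongrightarrow> 0) at_top"
    and scale: "eventually (\<lambda>l. a l > 0 \<and> l * a l = N (a l)) (at_right 0)"
    and a_anti: "eventually (\<lambda>l. \<forall>l'. 0 < l' \<and> l' \<le> l \<longrightarrow> a l \<le> a l') (at_right 0)"
  shows "\<exists>m :: real \<Rightarrow> nat.
     (\<forall>l1 l2. 0 < l1 \<and> l1 \<le> l2 \<and> l2 \<le> 1 \<longrightarrow> m l2 \<le> m l1) \<and>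
     filterlim (\<lambda>l. real (m l)) at_top (at_right 0) \<and>
     ((\<lambda>l. real (m l) / real (nat \<lfloor>1 / (l * a l)\<rfloor>)) \<longlongrightarrow> 0) (at_right 0) \<and>
     (\<forall>z. 0 \<le> z \<and> z < 1 \<longrightarrow> filterlim (\<lambda>l. real (m l) * N (a l * z)) at_top (at_right 0))"
proof -
  have a_lim: "filterlim a at_top (at_right 0)"
    using scale by (intro scale_tendsto_infinity[OF N_pos N_anti]) (auto elim: eventually_mono)
  obtain K :: "real \<Rightarrow> nat" where K_lim: "filterlim K at_top at_top"
    and K_gap: "\<And>z. 0 \<le> z \<Longrightarrow> z < 1 \<Longrightarrow>
      eventually (\<lambda>x. (real (K x) + 1)^2 * N x \<le> N (z * x)) at_top"
    using rapid_variation_diagonal[OF N_pos N_anti N_rapid] by blast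
  define k where "k l = real (K (a l))" for l
  have "filterlim (\<lambda>l. 1 + k l) at_top (at_right 0)"
    unfolding k_def by (intro filterlim_tendsto_add_at_top[OF tendsto_const]
        filterlim_compose[OF filterlim_real_sequentially filterlim_compose[OF K_lim a_lim]])
  then have k_lim: "filterlim (\<lambda>l. k l + 1) at_top (at_right 0)"
    by (simp add: add.commute)
  define f where "f l = nat \<lfloor>1 / (N (a l) * (k l + 1))\<rfloor>" for l
  define m where "m = running_inf f"
  have f_lower: "filterlim (\<lambda>l. real (f l) * N (a l * z)) at_top (at_right 0)"
    if z: "0 \<le> z" "z < 1" for z
  proof (rule filterlim_at_top_mono[OF filterlim_tendsto_add_at_top[OF tendsto_const k_lim]])
    show "eventually (\<lambda>l. - N 0 + (k l + 1) \<le> real (f l) * N (a l * z)) (at_right 0)"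
      using scale eventually_compose_filterlim[OF K_gap[OF z] a_lim]
    proof eventually_elim
      case (elim l)
      have gap: "(k l + 1)^2 * N (a l) \<le> N (a l * z)"
        using elim by (simp add: k_def mult.commute)
      have "N (a l * z) \<le> N 0" using elim z by (intro N_anti) simp
      from floor_product_lower_bound[OF N_pos _ gap this]
      show ?case by (simp add: f_def k_def)
    qed
  qed
  have m_lower: "filterlim (\<lambda>l. real (m l) * N (a l * z)) at_top (at_right 0)"
    if z: "0 \<le> z" "z < 1" for z
    unfolding m_def
  proof (rule running_inf_filterlim[OF f_lower[OF z]])
    show "eventually (\<lambda>l. \<forall>l'. 0 < l' \<and> l' \<le> l \<longrightarrow> N (a l' * z) \<le> N (a l * z)) (at_right 0)"
      using a_anti by eventually_elim (use z N_anti mult_right_mono in blast)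
  qed
  have m_lim: "filterlim (\<lambda>l. real (m l)) at_top (at_right 0)"
  proof -
    have "filterlim (\<lambda>l. (1 / N 0) * (real (m l) * N (a l * 0))) at_top (at_right 0)"
      using N_pos[of 0] by (intro filterlim_tendsto_pos_mult_at_top[OF tendsto_const _ m_lower]) auto
    then show ?thesis using N_pos[of 0] by simp
  qed
  have m_ratio: "((\<lambda>l. real (m l) / real (nat \<lfloor>1 / (l * a l)\<rfloor>)) \<longlongrightarrow> 0) (at_right 0)"
  proof (rule tendsto_sandwich[of "\<lambda>_. 0" _ _ "\<lambda>l. 2 / (k l + 1)"])
    have "eventually (\<lambda>x. N x < 1/2) at_top"
      using order_tendstoD(2)[OF rapid_variation_tendsto_0[OF N_pos N_anti N_rapid], of "1/2"]
      by simp
    then have "eventually (\<lambda>l. N (a l) < 1/2) (at_right 0)"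
      by (rule eventually_compose_filterlim[OF _ a_lim])
    with scale eventually_at_right_less[of 0]
    show "eventually (\<lambda>l. real (m l) / real (nat \<lfloor>1 / (l * a l)\<rfloor>) \<le> 2 / (k l + 1)) (at_right 0)"
    proof eventually_elim
      case (elim l)
      have "real (m l) \<le> real (f l)" using running_inf_le[OF elim(2)] by (simp add: m_def)
      also have "\<dots> \<le> 1 / (N (a l) * (k l + 1))"
        using N_pos[of "a l"] by (simp add: f_def k_def)
      finally show ?case
        using floor_ratio_upper_bound[of "N (a l)" "k l" "m l"] N_pos elim by (simp add: k_def)
    qed
    show "((\<lambda>l. 2 / (k l + 1)) \<longlongrightarrow> 0) (at_right 0)"
      by (intro tendsto_divide_0[OF tendsto_const] filterlim_at_top_imp_at_infinity k_lim)
  qed simp_all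
  show ?thesis
    using running_inf_antimono m_lim m_ratio m_lower unfolding m_def by blast
qed

lemma a_lam_scale_equation:
  assumes "H_S_inf mu" "0 < l" "l \<le> nu_tail mu 1"
  shows "a_lam mu l > 0" and "l * a_lam mu l = nu_tail mu (a_lam mu l)"
proof -
  note solution = scale_equation_solution[OF nu_tail_pos[OF assms(1)]
      nu_tail_antimono[OF assms(1)] nu_tail_continuous[OF assms(1)] assms(2,3)]
  show "a_lam mu l > 0" unfolding a_lam_def by (rule solution(1))
  show "l * a_lam mu l = nu_tail mu (a_lam mu l)" unfolding a_lam_def by (rule solution(2))
qed

lemma a_lam_eventually:
  assumes "H_S_inf mu"
  shows "eventually (\<lambda>l. a_lam mu l > 0 \<and> l * a_lam mu l = nu_tail mu (a_lam mu l)) (at_right 0)"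
    and "eventually (\<lambda>l. \<forall>l'. 0 < l' \<and> l' \<le> l \<longrightarrow> a_lam mu l \<le> a_lam mu l') (at_right 0)"
proof -
  have small: "eventually (\<lambda>l. 0 < l \<and> l < nu_tail mu 1) (at_right 0)"
    unfolding eventually_at_right_field
    using nu_tail_pos[OF assms, of 1] by (intro exI[of _ "nu_tail mu 1"]) auto
  then show "eventually (\<lambda>l. a_lam mu l > 0 \<and>
      l * a_lam mu l = nu_tail mu (a_lam mu l)) (at_right 0)"
  proof eventually_elim
    case (elim l)
    then show ?case using a_lam_scale_equation[OF assms, of l] by simp
  qed
  show "eventually (\<lambda>l. \<forall>l'. 0 < l' \<and> l' \<le> l \<longrightarrow>
      a_lam mu l \<le> a_lam mu l') (at_right 0)"
    using small
  proof eventually_elim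
    case (elim l)
    show ?case
    proof (intro allI impI)
      fix l' assume l': "0 < l' \<and> l' \<le> l"
      then have "l' \<le> nu_tail mu 1" using elim by simp
      then have pos': "a_lam mu l' > 0" and eq': "l' * a_lam mu l' = nu_tail mu (a_lam mu l')"
        using a_lam_scale_equation[OF assms] l' by auto
      have eq: "l * a_lam mu l = nu_tail mu (a_lam mu l)"
        using a_lam_scale_equation(2)[OF assms] elim by simp
      show "a_lam mu l \<le> a_lam mu l'"
        using l' by (intro scale_antimono[OF nu_tail_antimono[OF assms] _ _ pos' eq eq']) auto
    qed
  qed
qed

theorem mainTheorem3:
  fixes mu :: "real measure"
  assumes "H_S_inf mu"
  shows "\<exists>m :: real \<Rightarrow> nat.
     (\<forall>l1 l2. 0 < l1 \<and> l1 \<le> l2 \<and> l2 \<le> 1 \<longrightarrow> m l2 \<le> m l1) \<and>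
     filterlim (\<lambda>l. real (m l)) at_top (at_right 0) \<and>
     ((\<lambda>l. real (m l) / real (n_lam mu l)) \<longlongrightarrow> 0) (at_right 0) \<and>
     (\<forall>z. 0 \<le> z \<and> z < 1 \<longrightarrow>
        filterlim (\<lambda>l. real (m l) * nu_tail mu (a_lam mu l * z)) at_top (at_right 0))"
proof -
  have rapid: "\<And>t. 0 < t \<Longrightarrow> t < 1 \<Longrightarrow>
      ((\<lambda>x. nu_tail mu x / nu_tail mu (t * x)) \<longlongrightarrow> 0) at_top"
    using assms unfolding H_S_inf_def by auto
  show ?thesis
    using intermediate_scale_exists[OF nu_tail_pos[OF assms] nu_tail_antimono[OF assms]
        rapid a_lam_eventually[OF assms]]
    unfolding n_lam_def .
qed

end
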